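(* Let $\mathrm{k}$ be an infinite field. For every integer $n\geq4$, the $\mathrm{k}$-algebra $\mathrm{k}[T]/(T^n)$ has infinitely many subalgebras.
   Context: Subalgebras are unital (contain $1$). *)

theory Defs
  imports "HOL-Computational_Algebra.Polynomial"
begin

text \<open>The k-algebra k[T]/(T^n), represented by canonical residues: polynomials of
degree < n, with the usual addition and scalar multiplication, and multiplication
followed by reduction modulo T^n.\<close>

definition trunc_carrier :: "nat \<Rightarrow> 'k::field poly set" where
  "trunc_carrier n = {p. p mod monom 1 n = p}"

definition trunc_mult :: "nat \<Rightarrow> 'k::field poly \<Rightarrow> 'k poly \<Rightarrow> 'k poly" where
  "trunc_mult n p q = (p * q) mod monom 1 n"

definition trunc_subalgebra :: "nat \<Rightarrow> 'k::field poly set \<Rightarrow> bool" where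
  "trunc_subalgebra n S \<longleftrightarrow>
     S \<subseteq> trunc_carrier n \<and>
     0 \<in> S \<and>
     (1 mod monom 1 n) \<in> S \<and>
     (\<forall>p\<in>S. \<forall>q\<in>S. p + q \<in> S) \<and>
     (\<forall>c. \<forall>p\<in>S. smult c p \<in> S) \<and>
     (\<forall>p\<in>S. \<forall>q\<in>S. trunc_mult n p q \<in> S)"

end

theory Submission
  imports Defs
begin

text \<open>For \<open>b \<in> k\<close>, the residues \<open>p\<close> with \<open>p\<^sub>1 = 0\<close> and \<open>p\<^sub>3 = b p\<^sub>2\<close> form a subalgebra:
when neither factor has a linear term, the coefficients of \<open>T\<^sup>2\<close> and \<open>T\<^sup>3\<close> in a product
are \<open>p\<^sub>0 q\<^sub>k + p\<^sub>k q\<^sub>0\<close>, so both linear conditions survive multiplication.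
For \<open>n \<ge> 4\<close> the element \<open>T\<^sup>2 + b T\<^sup>3\<close> lies in the subalgebra for \<open>b\<close> only,
so an infinite field yields infinitely many distinct subalgebras.\<close>

lemma coeff_mod_monom_1:
  fixes p :: "'k::field poly"
  assumes "i < n"
  shows "coeff (p mod monom 1 n) i = coeff p i"
proof -
  have "p = monom 1 n * (p div monom 1 n) + p mod monom 1 n"
    by (metis div_mult_mod_eq mult.commute)
  then have "coeff p i = coeff (monom 1 n * (p div monom 1 n)) i + coeff (p mod monom 1 n) i"
    by (metis coeff_add)
  with assms show ?thesis
    by (simp add: coeff_monom_mult)
qed

lemma mod_monom_1_eq_self:
  fixes p :: "'k::field poly"
  assumes "degree p < n"
  shows "p mod monom 1 n = p"
  using assms by (intro mod_poly_less) (simp add: degree_monom_eq)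

lemma coeff_mult_no_linear_term:
  fixes p q :: "'a::comm_semiring_1 poly"
  assumes "coeff p 1 = 0" "coeff q 1 = 0" "0 < k" "k \<le> 3"
  shows "coeff (p * q) k = coeff p 0 * coeff q k + coeff p k * coeff q 0"
proof -
  from assms(3,4) have "k = 1 \<or> k = 2 \<or> k = 3" by auto
  with assms(1,2) show ?thesis
    by (auto simp: coeff_mult numeral_2_eq_2 numeral_3_eq_3 atMost_Suc add.commute)
qed

definition slope_subalgebra :: "nat \<Rightarrow> 'k::field \<Rightarrow> 'k poly set" where
  "slope_subalgebra n b =
     {p. p mod monom 1 n = p \<and> coeff p 1 = 0 \<and> coeff p 3 = b * coeff p 2}"

lemma trunc_mult_slope_subalgebra:
  assumes "n \<ge> 4" "p \<in> slope_subalgebra n b" "q \<in> slope_subalgebra n b"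
  shows "trunc_mult n p q \<in> slope_subalgebra n b"
proof -
  have p: "coeff p 1 = 0" "coeff p 3 = b * coeff p 2"
    and q: "coeff q 1 = 0" "coeff q 3 = b * coeff q 2"
    using assms(2,3) by (auto simp: slope_subalgebra_def)
  have pq: "coeff (p * q) k = coeff p 0 * coeff q k + coeff p k * coeff q 0"
    if "0 < k" "k \<le> 3" for k
    using coeff_mult_no_linear_term[OF p(1) q(1) that] .
  show ?thesis
    using assms(1) p q pq[of 1] pq[of 2] pq[of 3]
    by (simp add: slope_subalgebra_def trunc_mult_def coeff_mod_monom_1 algebra_simps)
qed

lemma trunc_subalgebra_slope_subalgebra:
  fixes b :: "'k::field"
  assumes "n \<ge> 4"
  shows "trunc_subalgebra n (slope_subalgebra n b)"
  unfolding trunc_subalgebra_def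
proof (intro conjI ballI allI)
  show "slope_subalgebra n b \<subseteq> trunc_carrier n"
    by (auto simp: slope_subalgebra_def trunc_carrier_def)
  show "0 \<in> slope_subalgebra n b"
    by (simp add: slope_subalgebra_def)
  have "1 mod monom (1::'k) n = 1"
    using assms by (intro mod_monom_1_eq_self) simp
  then show "1 mod monom 1 n \<in> slope_subalgebra n b"
    by (simp add: slope_subalgebra_def)
next
  fix p q assume "p \<in> slope_subalgebra n b" "q \<in> slope_subalgebra n b"
  then show "p + q \<in> slope_subalgebra n b"
    by (simp add: slope_subalgebra_def poly_mod_add_left algebra_simps)
  show "trunc_mult n p q \<in> slope_subalgebra n b"
    using assms \<open>p \<in> _\<close> \<open>q \<in> _\<close> by (rule trunc_mult_slope_subalgebra)
next
  fix c p assume "p \<in> slope_subalgebra n b"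
  then show "smult c p \<in> slope_subalgebra n b"
    by (simp add: slope_subalgebra_def mod_smult_left)
qed

lemma inj_slope_subalgebra:
  assumes "n \<ge> 4"
  shows "inj (slope_subalgebra n :: 'k::field \<Rightarrow> 'k poly set)"
proof (rule injI)
  fix b c :: 'k
  assume eq: "slope_subalgebra n b = slope_subalgebra n c"
  let ?x = "monom 1 2 + monom b 3"
  have "degree ?x < n"
    using assms
    by (intro le_less_trans[OF degree_add_le_max]) (auto intro: le_less_trans[OF degree_monom_le])
  then have "?x \<in> slope_subalgebra n b"
    by (simp add: slope_subalgebra_def mod_monom_1_eq_self)
  then have "?x \<in> slope_subalgebra n c"
    by (simp add: eq)
  then show "b = c"
    by (simp add: slope_subalgebra_def)
qed

theorem lemma3p4:
  fixes n :: nat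
  assumes "infinite (UNIV :: 'k::field set)"
    and "n \<ge> 4"
  shows "infinite {S :: 'k poly set. trunc_subalgebra n S}"
proof (rule infinite_super)
  show "range (slope_subalgebra n :: 'k \<Rightarrow> _) \<subseteq> {S. trunc_subalgebra n S}"
    using trunc_subalgebra_slope_subalgebra[OF assms(2)] by auto
  show "infinite (range (slope_subalgebra n :: 'k \<Rightarrow> _))"
    using finite_imageD[OF _ inj_slope_subalgebra[OF assms(2)]] assms(1) by blast
qed

end
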